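(* Let $(Z_i)_{i\ge1}$ be i.i.d. non-constant real random variables. For each $n$ let $(a_{n,i})_{i\ge1}$ be real constants, and for $k\ge1$ let $M_{n,k}$ be the $k$-th largest of $(a_{n,i}+Z_i)_{i\ge1}$. If $M_{n,1}\to0$ in probability as $n\to\infty$, then for each $k\ge1$, $M_{n,k}\to0$ in probability as $n\to\infty$.
   Context: The $k$-th largest value (counted with multiplicity) is $M_{n,k}=\sup\{x\in\mathbb R:\#\{i:a_{n,i}+Z_i\ge x\}\ge k\}\in[-\infty,\infty]$. *)

theory Defs
  imports "HOL-Probability.Probability"
begin

text \<open>k-th largest value (with multiplicity) of the family (a i + z i), i ranging over nat:
  sup {x real. #{i. a i + z i \<ge> x} \<ge> k}, in the extended reals (Sup of empty set = -\<infinity>).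
  "#S \<ge> k" (S possibly infinite) is rendered as: S contains a finite subset of cardinality k.\<close>
definition kth_largest :: "(nat \<Rightarrow> real) \<Rightarrow> (nat \<Rightarrow> real) \<Rightarrow> nat \<Rightarrow> ereal" where
  "kth_largest a z k =
     Sup (ereal ` {x::real. \<exists>F. F \<subseteq> {i. x \<le> a i + z i} \<and> finite F \<and> card F = k})"

end

theory Submission
  imports Defs
begin

(* If M_{n,1} -> 0 in probability, then for small delta > 0, with high probability no
   a_{n,i} + Z_i reaches delta, and not all of them stay below -delta.  Pick x and d > 0 with
   alpha = P(Z_0 <= x) > 0 and P(Z_0 >= x + d) > 0 (Z_0 is not a.s. constant) and delta <= d/2.
   The first fact forces a_{n,i} < -delta - x for every i, so each event a_{n,i} + Z_i < -delta
   has probability at least alpha; by the second fact and independence, the product of these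
   probabilities is small, say below r^k.  Such a product of factors in [alpha, 1] can be cut
   into k consecutive blocks, each with product at most r / alpha.  Outside an event of
   probability at most k r / alpha every block then contains an index with
   a_{n,i} + Z_i >= -delta, so M_{n,k} >= -delta; together with M_{n,k} <= M_{n,1} this gives
   P(|M_{n,k}| >= eps) <= P(|M_{n,1}| >= eps) + k r / alpha. *)

lemma kth_largest_eq_SUP_INF:
  "kth_largest a z k = (SUP F\<in>{F. finite F \<and> card F = k}. INF i\<in>F. ereal (a i + z i))"
proof -
  define S where "S = {x. \<exists>F\<subseteq>{i. x \<le> a i + z i}. finite F \<and> card F = k}"
  have INF_le: "(INF i\<in>F. ereal (a i + z i)) \<le> Sup (ereal ` S)" if F: "finite F" "card F = k" for F
  proof (cases "F = {}")
    case True
    then have "S = UNIV" using F by (auto simp: S_def intro: exI[of _ "{}"])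
    have "(INF i\<in>F. ereal (a i + z i)) = (SUP n. ereal (real n))"
      using True by (simp add: SUP_nat_Infty top_ereal_def)
    also have "\<dots> \<le> Sup (ereal ` S)"
      unfolding \<open>S = UNIV\<close> by (rule Sup_subset_mono) auto
    finally show ?thesis .
  next
    case False
    define i0 where "i0 = arg_min_on (\<lambda>i. a i + z i) F"
    have "i0 \<in> F" and i0_min: "\<And>j. j \<in> F \<Longrightarrow> a i0 + z i0 \<le> a j + z j"
      using arg_min_if_finite[OF F(1) False, of "\<lambda>i. a i + z i"] unfolding i0_def
      by (auto simp: not_less)
    then have "(INF i\<in>F. ereal (a i + z i)) \<le> ereal (a i0 + z i0)"
      by (intro INF_lower)
    also have "\<dots> \<le> Sup (ereal ` S)"
      using F i0_min by (intro Sup_upper imageI) (auto simp: S_def)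
    finally show ?thesis .
  qed
  show ?thesis
    unfolding kth_largest_def S_def[symmetric]
  proof (rule antisym)
    show "Sup (ereal ` S) \<le> (SUP F\<in>{F. finite F \<and> card F = k}. INF i\<in>F. ereal (a i + z i))"
      by (auto simp: S_def intro!: Sup_least SUP_upper2 INF_greatest)
    show "(SUP F\<in>{F. finite F \<and> card F = k}. INF i\<in>F. ereal (a i + z i)) \<le> Sup (ereal ` S)"
      using INF_le by (intro SUP_least) auto
  qed
qed

lemma kth_largest_1_eq_SUP: "kth_largest a z 1 = (SUP i. ereal (a i + z i))"
proof -
  have singletons: "{F. finite F \<and> card F = 1} = range (\<lambda>i. {i})"
    by (auto simp: card_1_singleton_iff)
  show ?thesis unfolding kth_largest_eq_SUP_INF singletons image_image by simp
qed

lemma kth_largest_antimono: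
  assumes "k \<le> l" shows "kth_largest a z l \<le> kth_largest a z k"
  unfolding kth_largest_eq_SUP_INF
proof (rule SUP_least)
  fix F :: "nat set" assume "F \<in> {F. finite F \<and> card F = l}"
  then obtain G where "G \<subseteq> F" "card G = k" "finite G"
    using assms obtain_subset_with_card_n[of k F] by auto
  then show "(INF i\<in>F. ereal (a i + z i)) \<le> (SUP F\<in>{F. finite F \<and> card F = k}. INF i\<in>F. ereal (a i + z i))"
    by (intro SUP_upper2[of G] INF_superset_mono) auto
qed

lemma abs_kth_largest_1_ge_if_all_less:
  assumes "0 \<le> \<delta>" "\<And>i. a i + z i < - \<delta>"
  shows "ereal \<delta> \<le> \<bar>kth_largest a z 1\<bar>"
proof -
  have "kth_largest a z 1 \<le> ereal (- \<delta>)"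
    unfolding kth_largest_1_eq_SUP using assms(2) by (intro SUP_least) (auto intro: less_imp_le)
  then show ?thesis using assms(1) by (cases "kth_largest a z 1") auto
qed

lemma abs_kth_largest_ge_cases:
  assumes "1 \<le> k" "\<delta> < \<epsilon>" "ereal \<epsilon> \<le> \<bar>kth_largest a z k\<bar>"
  shows "ereal \<epsilon> \<le> \<bar>kth_largest a z 1\<bar> \<or> kth_largest a z k < ereal (- \<delta>)"
proof -
  have "kth_largest a z k \<le> kth_largest a z 1"
    using assms(1) by (rule kth_largest_antimono)
  then show ?thesis using assms(2,3) by (cases "kth_largest a z k"; cases "kth_largest a z 1") auto
qed

lemma kth_largest_geI:
  assumes "F \<subseteq> {i. x \<le> a i + z i}" "finite F" "card F = k"
  shows "ereal x \<le> kth_largest a z k"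
  unfolding kth_largest_def using assms by (intro Sup_upper) auto

lemma borel_measurable_kth_largest[measurable]:
  assumes [measurable]: "\<And>i. f i \<in> borel_measurable M"
  shows "(\<lambda>\<omega>. kth_largest a (\<lambda>i. f i \<omega>) k) \<in> borel_measurable M"
proof -
  have "countable {F :: nat set. finite F \<and> card F = k}"
    by (rule countable_subset[OF _ countable_Collect_finite]) auto
  then show ?thesis unfolding kth_largest_eq_SUP_INF by measurable
qed

lemma card_subset_hitting_blocks:
  fixes mm :: "nat \<Rightarrow> nat"
  assumes "\<And>j. j < k \<Longrightarrow> \<exists>i\<in>{mm j..<mm (Suc j)}. P i"
  shows "\<exists>F\<subseteq>{i. P i}. finite F \<and> card F = k"
proof -
  have "\<exists>F\<subseteq>{i. i < mm k \<and> P i}. finite F \<and> card F = k"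
    using assms
  proof (induction k)
    case 0
    show ?case by auto
  next
    case (Suc k)
    then obtain F where F: "F \<subseteq> {i. i < mm k \<and> P i}" "finite F" "card F = k" by auto
    obtain i where i: "mm k \<le> i" "i < mm (Suc k)" "P i" using Suc.prems[of k] by auto
    have "i \<notin> F" using F(1) i(1) by auto
    then have "card (insert i F) = Suc k" using F(2,3) by simp
    moreover have "insert i F \<subseteq> {i. i < mm (Suc k) \<and> P i}" using F(1) i by auto
    ultimately show ?case using F(2) by blast
  qed
  then show ?thesis by blast
qed

lemma kth_largest_ge_if_blocks:
  fixes mm :: "nat \<Rightarrow> nat"
  assumes "\<And>j. j < k \<Longrightarrow> \<exists>i\<in>{mm j..<mm (Suc j)}. t \<le> a i + z i"
  shows "ereal t \<le> kth_largest a z k"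
proof -
  obtain F where "F \<subseteq> {i. t \<le> a i + z i}" "finite F" "card F = k"
    using card_subset_hitting_blocks[of k mm "\<lambda>i. t \<le> a i + z i", OF assms] by blast
  then show ?thesis by (rule kth_largest_geI)
qed

lemma prod_blocks_le:
  fixes c :: "nat \<Rightarrow> real"
  assumes c: "\<And>i. \<alpha> \<le> c i" "\<And>i. c i \<le> 1" and "0 < \<alpha>" "0 < r" "r \<le> 1"
    and small: "(\<Prod>i<m. c i) < r ^ k"
  obtains mm where "\<And>j. j < k \<Longrightarrow> (\<Prod>i\<in>{mm j..<mm (Suc j)}. c i) \<le> r / \<alpha>"
proof -
  define Q where "Q m = (\<Prod>i<m. c i)" for m
  have Q_pos: "0 < Q m" for m
    unfolding Q_def using c \<open>0 < \<alpha>\<close> by (auto intro: prod_pos less_le_trans)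
  \<comment> \<open>mm j is the first index at which the partial product has dropped to r^j; as every
    factor is at least \<alpha>, it is still at least \<alpha> r^j there.\<close>
  define mm where "mm j = (LEAST m. Q m \<le> r ^ j)" for j
  have Q_mm_le: "Q (mm j) \<le> r ^ j" if "j \<le> k" for j
    unfolding mm_def
  proof (rule LeastI)
    show "Q m \<le> r ^ j"
      using small that \<open>0 < r\<close> \<open>r \<le> 1\<close> power_decreasing[of j k r] by (simp add: Q_def)
  qed
  have Q_mm_ge: "\<alpha> * r ^ j \<le> Q (mm j)" for j
  proof (cases "mm j")
    case 0
    then show ?thesis
      using c[of 0] \<open>0 < r\<close> \<open>r \<le> 1\<close> by (simp add: Q_def mult_le_one power_le_one)
  next
    case (Suc p)
    then have "r ^ j < Q p" using not_less_Least[of p "\<lambda>m. Q m \<le> r ^ j"] by (simp add: mm_def)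
    then have "r ^ j * \<alpha> \<le> Q p * c p"
      using c[of p] Q_pos[of p] \<open>0 < r\<close> \<open>0 < \<alpha>\<close> by (intro mult_mono) auto
    then show ?thesis using Suc by (simp add: Q_def mult.commute)
  qed
  show ?thesis
  proof (rule that)
    fix j assume "j < k"
    have "Q (mm (Suc j)) \<le> r ^ Suc j" using Q_mm_le[of "Suc j"] \<open>j < k\<close> by simp
    also have "\<dots> \<le> r ^ j" using \<open>0 < r\<close> \<open>r \<le> 1\<close> by (intro power_decreasing) auto
    finally have "mm j \<le> mm (Suc j)" unfolding mm_def[of j] by (rule Least_le)
    then have "Q (mm (Suc j)) = Q (mm j) * (\<Prod>i\<in>{mm j..<mm (Suc j)}. c i)"
      unfolding Q_def by (simp add: atLeast0LessThan[symmetric] prod.atLeastLessThan_concat)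
    then have "(\<Prod>i\<in>{mm j..<mm (Suc j)}. c i) = Q (mm (Suc j)) / Q (mm j)"
      using Q_pos[of "mm j"] by (simp add: field_simps)
    also have "\<dots> \<le> r ^ Suc j / (\<alpha> * r ^ j)"
      using Q_mm_le[of "Suc j"] Q_mm_ge[of j] Q_pos \<open>j < k\<close> \<open>0 < \<alpha>\<close> \<open>0 < r\<close>
      by (intro frac_le) auto
    also have "\<dots> = r / \<alpha>" using \<open>0 < r\<close> by simp
    finally show "(\<Prod>i\<in>{mm j..<mm (Suc j)}. c i) \<le> r / \<alpha>" .
  qed
qed

lemma (in prob_space) prob_eq_if_distr_eq:
  assumes "distr M borel X = distr M borel Y" "X \<in> borel_measurable M" "Y \<in> borel_measurable M"
    and "B \<in> sets borel"
  shows "prob {\<omega>\<in>space M. X \<omega> \<in> B} = prob {\<omega>\<in>space M. Y \<omega> \<in> B}"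
proof -
  have "measure (distr M borel X) B = measure (distr M borel Y) B" using assms(1) by simp
  then show ?thesis using assms(2-4) by (simp add: measure_distr vimage_def Int_def conj_commute)
qed

lemma (in prob_space) prob_forall_indep:
  assumes "indep_vars M' Z I" "finite J" "J \<subseteq> I" "\<And>i. i \<in> J \<Longrightarrow> A i \<in> sets (M' i)"
  shows "prob {\<omega>\<in>space M. \<forall>i\<in>J. Z i \<omega> \<in> A i} = (\<Prod>i\<in>J. prob {\<omega>\<in>space M. Z i \<omega> \<in> A i})"
proof (cases "J = {}")
  case True
  then show ?thesis by (simp add: prob_space)
next
  case False
  have "{\<omega>\<in>space M. \<forall>i\<in>J. Z i \<omega> \<in> A i} = (\<Inter>i\<in>J. Z i -` A i \<inter> space M)"
    using False by auto
  moreover have "{\<omega>\<in>space M. Z i \<omega> \<in> A i} = Z i -` A i \<inter> space M" for i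
    by auto
  ultimately show ?thesis using indep_varsD[OF assms(1) False] assms(2-4) by simp
qed

lemma (in prob_space) tendsto_prob_forall_lessThan:
  assumes "\<And>i. {\<omega>\<in>space M. P i \<omega>} \<in> sets M"
  shows "(\<lambda>m. prob {\<omega>\<in>space M. \<forall>i<m. P i \<omega>}) \<longlonglongrightarrow> prob {\<omega>\<in>space M. \<forall>i. P i \<omega>}"
proof -
  define A where "A m = {\<omega>\<in>space M. \<forall>i<m. P i \<omega>}" for m
  have "A m \<in> sets M" for m
  proof -
    have "A m = {\<omega>\<in>space M. \<forall>i\<in>{..<m}. P i \<omega>}" by (auto simp: A_def)
    also have "\<dots> \<in> sets M" using assms by (intro sets.sets_Collect_finite_All) auto
    finally show ?thesis .
  qed
  then have "range A \<subseteq> sets M" by auto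
  moreover have "decseq A"
    unfolding decseq_def A_def by auto
  ultimately have "(\<lambda>m. prob (A m)) \<longlonglongrightarrow> prob (\<Inter>m. A m)"
    by (rule finite_Lim_measure_decseq)
  moreover have "(\<Inter>m. A m) = {\<omega>\<in>space M. \<forall>i. P i \<omega>}"
  proof (intro equalityI subsetI)
    fix \<omega> assume "\<omega> \<in> (\<Inter>m. A m)"
    then have "\<omega> \<in> A (Suc i)" for i by blast
    then show "\<omega> \<in> {\<omega>\<in>space M. \<forall>i. P i \<omega>}" unfolding A_def by auto
  qed (auto simp: A_def)
  ultimately show ?thesis by (simp add: A_def)
qed

lemma (in prob_space) AE_eq_const_if_rat_cuts_null:
  fixes X :: "'a \<Rightarrow> real"
  assumes [measurable]: "X \<in> borel_measurable M"
    and cuts: "\<And>q q' :: rat. q < q' \<Longrightarrow>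
      prob {\<omega>\<in>space M. X \<omega> \<le> of_rat q} = 0 \<or> prob {\<omega>\<in>space M. of_rat q' \<le> X \<omega>} = 0"
  shows "\<exists>c. AE \<omega> in M. X \<omega> = c"
proof -
  define lo where "lo q \<longleftrightarrow> prob {\<omega>\<in>space M. X \<omega> \<le> of_rat q} = 0" for q :: rat
  define hi where "hi q \<longleftrightarrow> prob {\<omega>\<in>space M. of_rat q \<le> X \<omega>} = 0" for q :: rat
  define good where "good \<omega> \<longleftrightarrow> (\<forall>q. lo q \<longrightarrow> of_rat q < X \<omega>) \<and> (\<forall>q. hi q \<longrightarrow> X \<omega> < of_rat q)"
    for \<omega>
  have le_sets: "{\<omega>\<in>space M. X \<omega> \<le> y} \<in> sets M" for y
    by measurable
  have ge_sets: "{\<omega>\<in>space M. y \<le> X \<omega>} \<in> sets M" for y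
    by measurable
  have lo_AE: "AE \<omega> in M. lo q \<longrightarrow> of_rat q < X \<omega>" for q
    by (rule AE_impI) (simp add: lo_def prob_Collect_eq_0[OF le_sets] not_le)
  have hi_AE: "AE \<omega> in M. hi q \<longrightarrow> X \<omega> < of_rat q" for q
    by (rule AE_impI) (simp add: hi_def prob_Collect_eq_0[OF ge_sets] not_le)
  have AE_good: "AE \<omega> in M. good \<omega>"
    unfolding good_def AE_conj_iff AE_all_countable using lo_AE hi_AE by blast
  obtain \<omega>0 where "good \<omega>0"
    using eventually_happens'[OF ae_filter_bot AE_good] by blast
  \<comment> \<open>Two good points with different values of X would be separated by rationals q < q'
    for which both lo q and hi q' fail.\<close>
  have not_less: "\<not> X \<omega> < X \<omega>'" if "good \<omega>" "good \<omega>'" for \<omega> \<omega>'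
  proof
    assume "X \<omega> < X \<omega>'"
    then obtain q where q: "X \<omega> < of_rat q" "of_rat q < X \<omega>'"
      using of_rat_dense by blast
    obtain q' where q': "(of_rat q :: real) < of_rat q'" "of_rat q' < X \<omega>'"
      using of_rat_dense[OF q(2)] by blast
    have "q < q'" using q'(1) by (simp add: of_rat_less)
    then show False using cuts[of q q'] that q q' unfolding good_def lo_def hi_def by force
  qed
  have "AE \<omega> in M. X \<omega> = X \<omega>0"
    using AE_good by eventually_elim (use not_less \<open>good \<omega>0\<close> in \<open>meson linorder_neqE\<close>)
  then show ?thesis by blast
qed

lemma (in prob_space) not_AE_const_imp_spread:
  fixes X :: "'a \<Rightarrow> real"
  assumes X: "X \<in> borel_measurable M" and not_const: "\<not> (\<exists>c. AE \<omega> in M. X \<omega> = c)"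
  obtains x d where "0 < d" "0 < prob {\<omega>\<in>space M. X \<omega> \<le> x}" "0 < prob {\<omega>\<in>space M. x + d \<le> X \<omega>}"
proof -
  have "\<exists>x d. 0 < d \<and> 0 < prob {\<omega>\<in>space M. X \<omega> \<le> x} \<and> 0 < prob {\<omega>\<in>space M. x + d \<le> X \<omega>}"
  proof (rule ccontr)
    assume no_spread: "\<not> ?thesis"
    have "prob {\<omega>\<in>space M. X \<omega> \<le> of_rat q} = 0 \<or> prob {\<omega>\<in>space M. of_rat q' \<le> X \<omega>} = 0"
      if "q < q'" for q q' :: rat
    proof -
      have "0 < of_rat q' - (of_rat q :: real)" using that by (simp add: of_rat_less)
      then have "\<not> (0 < prob {\<omega>\<in>space M. X \<omega> \<le> of_rat q} \<and>
          0 < prob {\<omega>\<in>space M. of_rat q + (of_rat q' - of_rat q) \<le> X \<omega>})"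
        using no_spread by blast
      then show ?thesis
        using measure_nonneg[of M "{\<omega>\<in>space M. X \<omega> \<le> of_rat q}"]
          measure_nonneg[of M "{\<omega>\<in>space M. of_rat q' \<le> X \<omega>}"] by auto
    qed
    then show False using AE_eq_const_if_rat_cuts_null[OF X] not_const by blast
  qed
  then show thesis using that by blast
qed

lemma (in prob_space) prob_kth_largest_less_le:
  fixes a :: "nat \<Rightarrow> real" and Z :: "nat \<Rightarrow> 'a \<Rightarrow> real"
  assumes indep: "indep_vars (\<lambda>_. borel) Z UNIV"
    and lower: "\<And>i. \<alpha> \<le> prob {\<omega>\<in>space M. a i + Z i \<omega> < t}" and "0 < \<alpha>"
    and tail: "prob {\<omega>\<in>space M. \<forall>i. a i + Z i \<omega> < t} < r ^ k" and "0 < r" "r \<le> 1"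
  shows "prob {\<omega>\<in>space M. kth_largest a (\<lambda>i. Z i \<omega>) k < ereal t} \<le> real k * (r / \<alpha>)"
proof -
  have [measurable]: "Z i \<in> borel_measurable M" for i
    using indep by (auto simp: indep_vars_def)
  define c where "c i = prob {\<omega>\<in>space M. a i + Z i \<omega> < t}" for i
  define B where "B J = {\<omega>\<in>space M. \<forall>i\<in>J. a i + Z i \<omega> < t}" for J
  have B_sets: "B J \<in> sets M" if "finite J" for J
    unfolding B_def using that by measurable
  have prob_B: "prob (B J) = (\<Prod>i\<in>J. c i)" if "finite J" for J
    using prob_forall_indep[OF indep that subset_UNIV, of "\<lambda>i. {..< t - a i}"]
    by (simp add: B_def c_def less_diff_eq add.commute)
  have "eventually (\<lambda>m. prob (B {..<m}) < r ^ k) sequentially"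
    using order_tendstoD(2)[OF tendsto_prob_forall_lessThan tail] by (simp add: B_def Ball_def)
  then obtain m where "(\<Prod>i<m. c i) < r ^ k"
    using prob_B by (auto simp: eventually_sequentially)
  moreover have "\<alpha> \<le> c i" "c i \<le> 1" for i
    using lower by (simp_all add: c_def)
  ultimately obtain mm where blocks: "\<And>j. j < k \<Longrightarrow> (\<Prod>i\<in>{mm j..<mm (Suc j)}. c i) \<le> r / \<alpha>"
    using prod_blocks_le[of \<alpha> c r m k] \<open>0 < \<alpha>\<close> \<open>0 < r\<close> \<open>r \<le> 1\<close> by blast
  have "{\<omega>\<in>space M. kth_largest a (\<lambda>i. Z i \<omega>) k < ereal t} \<subseteq> (\<Union>j<k. B {mm j..<mm (Suc j)})"
  proof (intro subsetI, rule ccontr)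
    fix \<omega> assume \<omega>: "\<omega> \<in> {\<omega>\<in>space M. kth_largest a (\<lambda>i. Z i \<omega>) k < ereal t}"
      and "\<omega> \<notin> (\<Union>j<k. B {mm j..<mm (Suc j)})"
    then have "ereal t \<le> kth_largest a (\<lambda>i. Z i \<omega>) k"
      by (intro kth_largest_ge_if_blocks) (auto simp: B_def not_less)
    then show False using \<omega> leD by blast
  qed
  then have "prob {\<omega>\<in>space M. kth_largest a (\<lambda>i. Z i \<omega>) k < ereal t} \<le> prob (\<Union>j<k. B {mm j..<mm (Suc j)})"
    using B_sets by (intro finite_measure_mono) auto
  also have "\<dots> \<le> (\<Sum>j<k. prob (B {mm j..<mm (Suc j)}))"
    using B_sets by (intro measure_UNION_le) auto
  also have "\<dots> \<le> (\<Sum>j<k. r / \<alpha>)"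
    using blocks prob_B by (intro sum_mono) auto
  finally show ?thesis by simp
qed

lemma (in prob_space) shift_less_if_prob_abs_max_small:
  fixes a :: "nat \<Rightarrow> real" and Z :: "nat \<Rightarrow> 'a \<Rightarrow> real"
  assumes ident: "distr M borel (Z i) = distr M borel (Z 0)"
    and Z_meas[measurable]: "\<And>i. Z i \<in> borel_measurable M"
    and "0 < \<delta>" "2 * \<delta> \<le> d"
    and small: "prob {\<omega>\<in>space M. ereal \<delta> \<le> \<bar>kth_largest a (\<lambda>i. Z i \<omega>) 1\<bar>}
      < prob {\<omega>\<in>space M. x + d \<le> Z 0 \<omega>}"
  shows "a i < - \<delta> - x"
proof (rule ccontr)
  assume "\<not> a i < - \<delta> - x"
  have [measurable]: "(\<lambda>\<omega>. kth_largest a (\<lambda>i. Z i \<omega>) 1) \<in> borel_measurable M"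
    by (intro borel_measurable_kth_largest Z_meas)
  have "{\<omega>\<in>space M. Z i \<omega> \<in> {x + d..}} \<subseteq> {\<omega>\<in>space M. ereal \<delta> \<le> \<bar>kth_largest a (\<lambda>i. Z i \<omega>) 1\<bar>}"
  proof (intro subsetI)
    fix \<omega> assume \<omega>: "\<omega> \<in> {\<omega>\<in>space M. Z i \<omega> \<in> {x + d..}}"
    then have "\<delta> \<le> a i + Z i \<omega>" using \<open>\<not> a i < - \<delta> - x\<close> \<open>2 * \<delta> \<le> d\<close> by auto
    then have "ereal \<delta> \<le> kth_largest a (\<lambda>i. Z i \<omega>) 1" by (intro kth_largest_geI[of "{i}"]) auto
    then show "\<omega> \<in> {\<omega>\<in>space M. ereal \<delta> \<le> \<bar>kth_largest a (\<lambda>i. Z i \<omega>) 1\<bar>}"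
      using \<omega> \<open>0 < \<delta>\<close> by (cases "kth_largest a (\<lambda>i. Z i \<omega>) 1") auto
  qed
  then have "prob {\<omega>\<in>space M. Z i \<omega> \<in> {x + d..}}
      \<le> prob {\<omega>\<in>space M. ereal \<delta> \<le> \<bar>kth_largest a (\<lambda>i. Z i \<omega>) 1\<bar>}"
    by (rule finite_measure_mono) measurable
  then show False using small prob_eq_if_distr_eq[OF ident Z_meas Z_meas, of "{x + d..}"] by simp
qed

lemma (in prob_space) prob_abs_kth_largest_ge_le:
  fixes a :: "nat \<Rightarrow> real" and Z :: "nat \<Rightarrow> 'a \<Rightarrow> real"
  assumes indep: "indep_vars (\<lambda>_. borel) Z UNIV"
    and ident: "\<And>i. distr M borel (Z i) = distr M borel (Z 0)"
    and "1 \<le> k" "0 < \<delta>" "\<delta> < \<epsilon>" "2 * \<delta> \<le> d" "0 < r" "r \<le> 1"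
    and pos: "0 < prob {\<omega>\<in>space M. Z 0 \<omega> \<le> x}"
    and small: "prob {\<omega>\<in>space M. ereal \<delta> \<le> \<bar>kth_largest a (\<lambda>i. Z i \<omega>) 1\<bar>}
      < min (prob {\<omega>\<in>space M. x + d \<le> Z 0 \<omega>}) (r ^ k)"
  shows "prob {\<omega>\<in>space M. ereal \<epsilon> \<le> \<bar>kth_largest a (\<lambda>i. Z i \<omega>) k\<bar>}
    \<le> prob {\<omega>\<in>space M. ereal \<epsilon> \<le> \<bar>kth_largest a (\<lambda>i. Z i \<omega>) 1\<bar>}
      + real k * (r / prob {\<omega>\<in>space M. Z 0 \<omega> \<le> x})"
proof -
  have Z_meas[measurable]: "Z i \<in> borel_measurable M" for i
    using indep by (auto simp: indep_vars_def)
  define M1 where "M1 \<omega> = kth_largest a (\<lambda>i. Z i \<omega>) 1" for \<omega>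
  define Mk where "Mk \<omega> = kth_largest a (\<lambda>i. Z i \<omega>) k" for \<omega>
  define S where "S e = {\<omega>\<in>space M. ereal e \<le> \<bar>M1 \<omega>\<bar>}" for e
  have [measurable]: "M1 \<in> borel_measurable M" "Mk \<in> borel_measurable M"
    unfolding M1_def Mk_def by (intro borel_measurable_kth_largest Z_meas)+
  have S_sets: "S e \<in> sets M" for e
    unfolding S_def by measurable
  have S_\<delta>: "prob (S \<delta>) < min (prob {\<omega>\<in>space M. x + d \<le> Z 0 \<omega>}) (r ^ k)"
    using small by (simp add: S_def M1_def)
  have lower: "prob {\<omega>\<in>space M. Z 0 \<omega> \<le> x} \<le> prob {\<omega>\<in>space M. a i + Z i \<omega> < - \<delta>}" for i
  proof -
    have "a i < - \<delta> - x"
      using shift_less_if_prob_abs_max_small[where Z = Z and i = i, OF ident Z_meas \<open>0 < \<delta>\<close> \<open>2 * \<delta> \<le> d\<close>] small by simp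
    then have "{\<omega>\<in>space M. Z i \<omega> \<in> {..x}} \<subseteq> {\<omega>\<in>space M. a i + Z i \<omega> < - \<delta>}"
      by auto
    then have "prob {\<omega>\<in>space M. Z i \<omega> \<in> {..x}} \<le> prob {\<omega>\<in>space M. a i + Z i \<omega> < - \<delta>}"
      by (rule finite_measure_mono) measurable
    then show ?thesis using prob_eq_if_distr_eq[OF ident[of i] Z_meas Z_meas, of "{..x}"] by simp
  qed
  have "{\<omega>\<in>space M. \<forall>i. a i + Z i \<omega> < - \<delta>} \<subseteq> S \<delta>"
  proof
    fix \<omega> assume "\<omega> \<in> {\<omega>\<in>space M. \<forall>i. a i + Z i \<omega> < - \<delta>}"
    then show "\<omega> \<in> S \<delta>"
      using abs_kth_largest_1_ge_if_all_less[of \<delta> a "\<lambda>i. Z i \<omega>"] \<open>0 < \<delta>\<close> by (simp add: S_def M1_def)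
  qed
  then have "prob {\<omega>\<in>space M. \<forall>i. a i + Z i \<omega> < - \<delta>} \<le> prob (S \<delta>)"
    using S_sets by (rule finite_measure_mono)
  then have tail: "prob {\<omega>\<in>space M. \<forall>i. a i + Z i \<omega> < - \<delta>} < r ^ k"
    using S_\<delta> by simp
  have "{\<omega>\<in>space M. ereal \<epsilon> \<le> \<bar>Mk \<omega>\<bar>} \<subseteq> S \<epsilon> \<union> {\<omega>\<in>space M. Mk \<omega> < ereal (- \<delta>)}"
    unfolding S_def M1_def Mk_def using abs_kth_largest_ge_cases[OF \<open>1 \<le> k\<close> \<open>\<delta> < \<epsilon>\<close>] by blast
  then have "prob {\<omega>\<in>space M. ereal \<epsilon> \<le> \<bar>Mk \<omega>\<bar>} \<le> prob (S \<epsilon> \<union> {\<omega>\<in>space M. Mk \<omega> < ereal (- \<delta>)})"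
    by (rule finite_measure_mono) (intro sets.Un S_sets; measurable)
  also have "\<dots> \<le> prob (S \<epsilon>) + prob {\<omega>\<in>space M. Mk \<omega> < ereal (- \<delta>)}"
    by (rule measure_Un_le) (use S_sets in measurable)
  finally have "prob {\<omega>\<in>space M. ereal \<epsilon> \<le> \<bar>Mk \<omega>\<bar>} \<le> prob (S \<epsilon>) + prob {\<omega>\<in>space M. Mk \<omega> < ereal (- \<delta>)}" .
  moreover have "prob {\<omega>\<in>space M. Mk \<omega> < ereal (- \<delta>)} \<le> real k * (r / prob {\<omega>\<in>space M. Z 0 \<omega> \<le> x})"
    unfolding Mk_def using prob_kth_largest_less_le[OF indep lower pos tail \<open>0 < r\<close> \<open>r \<le> 1\<close>] .
  ultimately show ?thesis by (simp add: S_def M1_def Mk_def)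
qed

lemma (in prob_space) prob_abs_kth_largest_ge_uniform_bound:
  fixes Z :: "nat \<Rightarrow> 'a \<Rightarrow> real"
  assumes indep: "indep_vars (\<lambda>_. borel) Z UNIV"
    and ident: "\<And>i. distr M borel (Z i) = distr M borel (Z 0)"
    and not_const: "\<not> (\<exists>c. AE \<omega> in M. Z 0 \<omega> = c)"
    and "1 \<le> k" "0 < \<epsilon>" "0 < \<eta>"
  obtains \<delta> \<gamma> where "0 < \<delta>" "0 < \<gamma>"
    "\<And>a. prob {\<omega>\<in>space M. ereal \<delta> \<le> \<bar>kth_largest a (\<lambda>i. Z i \<omega>) 1\<bar>} < \<gamma> \<Longrightarrow>
      prob {\<omega>\<in>space M. ereal \<epsilon> \<le> \<bar>kth_largest a (\<lambda>i. Z i \<omega>) k\<bar>}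
        \<le> prob {\<omega>\<in>space M. ereal \<epsilon> \<le> \<bar>kth_largest a (\<lambda>i. Z i \<omega>) 1\<bar>} + \<eta>"
proof -
  have "Z 0 \<in> borel_measurable M"
    using indep by (auto simp: indep_vars_def)
  then obtain x d where "0 < d" and \<alpha>_pos: "0 < prob {\<omega>\<in>space M. Z 0 \<omega> \<le> x}"
    and \<beta>_pos: "0 < prob {\<omega>\<in>space M. x + d \<le> Z 0 \<omega>}"
    using not_AE_const_imp_spread not_const by blast
  define \<alpha> where "\<alpha> = prob {\<omega>\<in>space M. Z 0 \<omega> \<le> x}"
  define \<delta> where "\<delta> = min (\<epsilon> / 2) (d / 2)"
  define r where "r = min 1 (\<eta> * \<alpha> / real k)"
  have \<delta>: "0 < \<delta>" "\<delta> < \<epsilon>" "2 * \<delta> \<le> d"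
    using \<open>0 < d\<close> \<open>0 < \<epsilon>\<close> by (auto simp: \<delta>_def)
  have r: "0 < r" "r \<le> 1" "real k * (r / \<alpha>) \<le> \<eta>"
    using \<open>0 < \<eta>\<close> \<alpha>_pos \<open>1 \<le> k\<close> by (auto simp: r_def \<alpha>_def min_def field_simps)
  show thesis
  proof (rule that[of \<delta> "min (prob {\<omega>\<in>space M. x + d \<le> Z 0 \<omega>}) (r ^ k)"])
    show "0 < \<delta>" "0 < min (prob {\<omega>\<in>space M. x + d \<le> Z 0 \<omega>}) (r ^ k)"
      using \<delta>(1) \<beta>_pos r(1) by simp_all
    fix a assume small: "prob {\<omega>\<in>space M. ereal \<delta> \<le> \<bar>kth_largest a (\<lambda>i. Z i \<omega>) 1\<bar>}
      < min (prob {\<omega>\<in>space M. x + d \<le> Z 0 \<omega>}) (r ^ k)"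
    show "prob {\<omega>\<in>space M. ereal \<epsilon> \<le> \<bar>kth_largest a (\<lambda>i. Z i \<omega>) k\<bar>}
        \<le> prob {\<omega>\<in>space M. ereal \<epsilon> \<le> \<bar>kth_largest a (\<lambda>i. Z i \<omega>) 1\<bar>} + \<eta>"
      using prob_abs_kth_largest_ge_le[OF indep ident \<open>1 \<le> k\<close> \<delta> r(1,2) \<alpha>_pos small] r(3)
      unfolding \<alpha>_def by linarith
  qed
qed

theorem lemma51:
  fixes M :: "'s measure" and Z :: "nat \<Rightarrow> 's \<Rightarrow> real" and a :: "nat \<Rightarrow> nat \<Rightarrow> real"
  assumes "prob_space M"
    and "prob_space.indep_vars M (\<lambda>_. borel) Z UNIV"
    and "\<And>i. distr M borel (Z i) = distr M borel (Z 0)"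
    and "\<not> (\<exists>c. AE \<omega> in M. Z 0 \<omega> = c)"
    and "\<And>\<epsilon>. \<epsilon> > 0 \<Longrightarrow>
          (\<lambda>n. measure M {\<omega> \<in> space M. ereal \<epsilon> \<le> \<bar>kth_largest (a n) (\<lambda>i. Z i \<omega>) 1\<bar>}) \<longlonglongrightarrow> 0"
    and "k \<ge> 1"
    and "\<epsilon> > 0"
  shows "(\<lambda>n. measure M {\<omega> \<in> space M. ereal \<epsilon> \<le> \<bar>kth_largest (a n) (\<lambda>i. Z i \<omega>) k\<bar>}) \<longlonglongrightarrow> 0"
proof -
  interpret prob_space M by (rule assms(1))
  define p where "p e l n = prob {\<omega> \<in> space M. ereal e \<le> \<bar>kth_largest (a n) (\<lambda>i. Z i \<omega>) l\<bar>}"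
    for e l n
  have p1: "p e 1 \<longlonglongrightarrow> 0" if "0 < e" for e
    using assms(5)[OF that] unfolding p_def .
  have "p \<epsilon> k \<longlonglongrightarrow> 0"
  proof (rule order_tendstoI)
    fix \<eta> :: real assume "0 < \<eta>"
    then have "0 < \<eta> / 2" by simp
    obtain \<delta> \<gamma> where "0 < \<delta>" "0 < \<gamma>" and bound_a:
      "\<And>b. prob {\<omega>\<in>space M. ereal \<delta> \<le> \<bar>kth_largest b (\<lambda>i. Z i \<omega>) 1\<bar>} < \<gamma> \<Longrightarrow>
        prob {\<omega>\<in>space M. ereal \<epsilon> \<le> \<bar>kth_largest b (\<lambda>i. Z i \<omega>) k\<bar>}
          \<le> prob {\<omega>\<in>space M. ereal \<epsilon> \<le> \<bar>kth_largest b (\<lambda>i. Z i \<omega>) 1\<bar>} + \<eta> / 2"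
      using prob_abs_kth_largest_ge_uniform_bound[OF assms(2-4,6,7) \<open>0 < \<eta> / 2\<close>] by blast
    have bound: "p \<epsilon> k n \<le> p \<epsilon> 1 n + \<eta> / 2" if "p \<delta> 1 n < \<gamma>" for n
      using bound_a[of "a n"] that unfolding p_def .
    have "eventually (\<lambda>n. p \<delta> 1 n < \<gamma>) sequentially"
      using order_tendstoD(2)[OF p1[OF \<open>0 < \<delta>\<close>] \<open>0 < \<gamma>\<close>] .
    moreover have "eventually (\<lambda>n. p \<epsilon> 1 n < \<eta> / 2) sequentially"
      using order_tendstoD(2)[OF p1[OF \<open>0 < \<epsilon>\<close>] \<open>0 < \<eta> / 2\<close>] .
    ultimately show "eventually (\<lambda>n. p \<epsilon> k n < \<eta>) sequentially"
    proof eventually_elim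
      case (elim n)
      then show ?case using bound[OF elim(1)] by linarith
    qed
  qed (auto simp: p_def intro!: always_eventually less_le_trans[OF _ measure_nonneg])
  then show ?thesis unfolding p_def .
qed

end
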